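(* In the algebra $\mathcal{B}_d$, every monomial of the form $e^{(a)}\binom{H_1}{b}f^{(c)}$ (with $a,b,c\ge0$) of degree $a+b+c=d+1$ is expressible as a $\mathbb{Q}$-linear combination of monomials of the same form $e^{(a')}\binom{H_1}{b'}f^{(c')}$ of strictly smaller degree $a'+b'+c'$ and strictly smaller height $a'+c'$. The same holds for monomials of the form $f^{(a)}\binom{H_2}{b}e^{(c)}$ (expressed via monomials $f^{(a')}\binom{H_2}{b'}e^{(c')}$).
   Context: Fix an integer $d\ge 0$. $\mathcal{B}_d$ is the associative $\mathbb{Q}$-algebra with $1$ generated by $e,f,H_1,H_2$ subject to the relations $H_1H_2=H_2H_1$, $H_1e-eH_1=e$, $H_1f-fH_1=-f$, $H_2e-eH_2=-e$, $H_2f-fH_2=f$, $ef-fe=H_1-H_2$, $H_1+H_2=d$, and $H_1(H_1-1)\cdots(H_1-d)=0$. For an element $T$ and integer $m\ge 0$, $T^{(m)}=T^m/m!$ and $\binom{T}{m}=T(T-1)\cdots(T-m+1)/m!$. The monomial $e^{(a)}\binom{H_1}{b}f^{(c)}$ (resp. $f^{(a)}\binom{H_2}{b}e^{(c)}$) has degree $a+b+c$ and height $a+c$. *)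

theory Defs
  imports Complex_Main
begin

class qalgebra_1 = ring_1 +
  fixes qscale :: "rat \<Rightarrow> 'a \<Rightarrow> 'a"
  assumes qscale_add_right: "qscale r (x + y) = qscale r x + qscale r y"
    and qscale_add_left: "qscale (r + s) x = qscale r x + qscale s x"
    and qscale_mult: "qscale r (qscale s x) = qscale (r * s) x"
    and qscale_one: "qscale 1 x = x"
    and qscale_mult_left: "qscale r (x * y) = qscale r x * y"
    and qscale_mult_right: "qscale r (x * y) = x * qscale r y"

primrec ffact :: "'a::ring_1 \<Rightarrow> nat \<Rightarrow> 'a" where
  "ffact T 0 = 1"
| "ffact T (Suc m) = ffact T m * (T - of_nat m)"

definition dpow :: "'a::qalgebra_1 \<Rightarrow> nat \<Rightarrow> 'a" where
  "dpow T m = qscale (1 / of_nat (fact m)) (T ^ m)"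

definition binomA :: "'a::qalgebra_1 \<Rightarrow> nat \<Rightarrow> 'a" where
  "binomA T m = qscale (1 / of_nat (fact m)) (ffact T m)"

definition Bd_relations :: "nat \<Rightarrow> 'a::qalgebra_1 \<Rightarrow> 'a \<Rightarrow> 'a \<Rightarrow> 'a \<Rightarrow> bool" where
  "Bd_relations d e f H1 H2 \<longleftrightarrow>
     H1 * H2 = H2 * H1 \<and>
     H1 * e - e * H1 = e \<and>
     H1 * f - f * H1 = - f \<and>
     H2 * e - e * H2 = - e \<and>
     H2 * f - f * H2 = f \<and>
     e * f - f * e = H1 - H2 \<and>
     H1 + H2 = of_nat d \<and>
     ffact H1 (d + 1) = 0"

end

theory Submission
  imports Defs "HOL-Computational_Algebra.Polynomial"
begin

text \<open>
  Write H = H1, so that H2 = d - H1, [H, e] = e, [H, f] = -f and [e, f] = 2H - d. The relation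
  H (H - 1) \<dots> (H - d) = 0 makes H diagonalisable: the Lagrange interpolation polynomials of
  the nodes 0, \<dots>, d, evaluated at H, are idempotents summing to 1, the k-th one is a weight
  vector of weight k, and a weight vector whose weight lies outside {0, \<dots>, d} vanishes.

  Let a + b + c = d + 1 and multiply e^a binom(H, b) f^c on the right by the idempotent of weight
  k. The factor binom(H, b) acts on f^c by the scalar binom(k - c, b), which vanishes unless
  k \<ge> b + c, that is, unless k + a > d. In that case each e, moved to the right through the
  powers of f, raises the weight, so the leading term dies and only commutator terms of smaller
  height remain. This puts the monomial in the span of the elements e^i p(H) f^j with i + j < a + c
  and p an arbitrary polynomial. An induction on the height, dividing p by the falling factorial
  of degree d + 1 - (i + j), then rewrites such an element with all degrees at most d. The
  statement for f, H2, e is the same argument for the triple (f, e, H2).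
\<close>

interpretation qspace: module "qscale :: rat \<Rightarrow> 'a::qalgebra_1 \<Rightarrow> 'a"
  by standard (simp_all add: qscale_add_right qscale_add_left qscale_mult qscale_one)

lemma mult_qscale_left: "qscale r x * y = qscale r (x * y :: 'a::qalgebra_1)"
  by (simp add: qscale_mult_left)

lemma mult_qscale_right: "x * qscale r y = qscale r (x * y :: 'a::qalgebra_1)"
  by (simp add: qscale_mult_right)

lemma qscale_of_nat: "qscale (of_nat n) x = of_nat n * (x :: 'a::qalgebra_1)"
  by (induct n) (simp_all add: qscale_add_left algebra_simps)

lemma (in module) span_image_sum:
  assumes "finite I" and "x \<in> span (g ` I)"
  shows "\<exists>c. x = (\<Sum>i\<in>I. c i *s g i)"
  using assms(2)
proof (induct rule: span_induct_alt)
  case base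
  show ?case by (intro exI[of _ "\<lambda>_. 0"]) simp
next
  case (step k x y)
  then obtain i c where "i \<in> I" "x = g i" "y = (\<Sum>i\<in>I. c i *s g i)"
    by blast
  moreover have "(\<Sum>l\<in>I. (if l = i then k else 0) *s g l)
      = (\<Sum>l\<in>I. if l = i then k *s g l else 0)"
    by (rule sum.cong) simp_all
  then have "(\<Sum>l\<in>I. (if l = i then k else 0) *s g l) = k *s g i"
    using assms(1) \<open>i \<in> I\<close> by simp
  ultimately have "k *s x + y = (\<Sum>l\<in>I. (c l + (if l = i then k else 0)) *s g l)"
    by (simp add: scale_left_distrib sum.distrib)
  then show ?case
    by (rule exI[of _ "\<lambda>l. c l + (if l = i then k else 0)"])
qed

lemma span_mult_right:
  assumes "x \<in> qspace.span G" and "\<forall>g\<in>G. g * z \<in> qspace.span G'"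
  shows "x * z \<in> qspace.span (G' :: 'a::qalgebra_1 set)"
  using assms(1)
proof (induct rule: qspace.span_induct)
  case base
  show ?case
    unfolding qspace.subspace_def
    by (simp add: distrib_right mult_qscale_left qspace.span_zero qspace.span_add qspace.span_scale)
qed (use assms(2) in blast)

section \<open>Polynomials in one element\<close>

text \<open>Horner evaluation; the library's \<^const>\<open>poly\<close> needs a commutative codomain.\<close>

definition qpoly :: "rat poly \<Rightarrow> 'a::qalgebra_1 \<Rightarrow> 'a" where
  "qpoly p X = fold_coeffs (\<lambda>a y. qscale a 1 + X * y) p 0"

lemma qpoly_0 [simp]: "qpoly 0 X = 0"
  by (simp add: qpoly_def)

lemma qpoly_pCons [simp]: "qpoly (pCons a p) X = qscale a 1 + X * qpoly p X"
  by (cases "p = 0 \<and> a = 0") (auto simp: qpoly_def fold_coeffs_def cCons_def)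

lemma qpoly_1 [simp]: "qpoly 1 X = 1"
  by (simp add: one_pCons)

lemma qpoly_X: "qpoly [:0, 1:] X = X"
  by simp

lemma qpoly_add: "qpoly (p + q) X = qpoly p X + qpoly q X"
proof (induct p arbitrary: q rule: pCons_induct)
  case (pCons a p)
  then show ?case
    by (cases q rule: pCons_cases) (simp add: qscale_add_left algebra_simps)
qed simp

lemma qpoly_smult: "qpoly (smult r p) X = qscale r (qpoly p X)"
  by (induct p) (simp_all add: qspace.scale_right_distrib mult_qscale_right)

interpretation qpoly_additive: additive "\<lambda>p. qpoly p X"
  by standard (rule qpoly_add)

lemma qpoly_mult: "qpoly (p * q) X = qpoly p X * qpoly q X"
  by (induct p) (simp_all add: qpoly_add qpoly_smult algebra_simps mult_qscale_left)

lemma qpoly_of_nat [simp]: "qpoly (of_nat n) X = of_nat n"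
  by (induct n) (simp_all add: qpoly_add)

lemma qpoly_ffact: "qpoly (ffact p n) X = ffact (qpoly p X) n"
  by (induct n) (simp_all add: qpoly_mult qpoly_additive.diff)

lemma qpoly_mult_commute: "qpoly p X * qpoly q X = qpoly q X * qpoly p X"
  by (metis qpoly_mult mult.commute)

lemma ffact_eq_prod: "ffact (x :: 'a::comm_ring_1) n = (\<Prod>j<n. x - of_nat j)"
  by (induct n) simp_all

lemma ffact_reflect:
  "ffact (of_nat d - x) (Suc d) = (-1) ^ Suc d * ffact (x :: 'a::comm_ring_1) (Suc d)"
proof -
  have "ffact (of_nat d - x) (Suc d) = (\<Prod>j<Suc d. - (x - of_nat (d - j)))"
    unfolding ffact_eq_prod by (rule prod.cong) auto
  also have "\<dots> = (-1) ^ Suc d * (\<Prod>j<Suc d. x - of_nat (d - j))"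
    by (simp only: prod_uminus card_lessThan)
  also have "(\<Prod>j<Suc d. x - of_nat (d - j)) = ffact x (Suc d)"
    using prod.nat_diff_reindex[of "\<lambda>j. x - of_nat j" "Suc d"] by (simp add: ffact_eq_prod)
  finally show ?thesis .
qed

lemma ffact_X_division:
  fixes p :: "'a::comm_ring_1 poly"
  shows "\<exists>s \<alpha>. p = s * ffact [:0, 1:] n + (\<Sum>t<n. smult (\<alpha> t) (ffact [:0, 1:] t))"
proof (induct n)
  case 0
  show ?case by (intro exI[of _ p]) simp
next
  case (Suc n)
  then obtain s \<alpha>
    where p: "p = s * ffact [:0, 1:] n + (\<Sum>t<n. smult (\<alpha> t) (ffact [:0, 1:] t))"
    by blast
  define s' where "s' = synthetic_div s (of_nat n)"
  define c where "c = poly s (of_nat n)"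
  define L where "L = [:- of_nat n, 1::'a:]"
  have s: "s = L * s' + [:c:]"
    unfolding s'_def c_def L_def by (rule synthetic_div_correct'[symmetric])
  have "ffact [:0, 1:] (Suc n) = ffact [:0, 1:] n * L"
    by (simp add: L_def of_nat_poly)
  then have "s * ffact [:0, 1:] n = s' * ffact [:0, 1:] (Suc n) + smult c (ffact [:0, 1:] n)"
    unfolding s by (simp add: algebra_simps)
  then have "p = s' * ffact [:0, 1:] (Suc n)
      + (\<Sum>t<Suc n. smult ((\<alpha>(n := c)) t) (ffact [:0, 1:] t))"
    by (simp add: p)
  then show ?case by blast
qed

section \<open>Weight vectors and Lagrange idempotents\<close>

lemma ad_eigen_power:
  assumes "X * Y - Y * X = qscale s Y"
  shows "X * Y ^ n - Y ^ n * X = qscale (of_nat n * s) (Y ^ n :: 'a::qalgebra_1)"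
proof (induct n)
  case (Suc n)
  have "X * Y ^ Suc n - Y ^ Suc n * X = (X * Y ^ n - Y ^ n * X) * Y + Y ^ n * (X * Y - Y * X)"
    unfolding power_Suc2 by (simp add: algebra_simps)
  then show ?case
    by (simp add: Suc assms mult_qscale_left mult_qscale_right qscale_add_left algebra_simps
        flip: power_Suc2)
qed simp

lemma ad_eigen_mult_qpoly:
  assumes "X * Y - Y * X = qscale s Y"
  shows "Y * qpoly p X = qpoly (p \<circ>\<^sub>p [:- s, 1:]) X * Y"
proof (induct p)
  case (pCons a p)
  have YX: "Y * X = (X - qscale s 1) * Y"
    using assms by (simp add: algebra_simps mult_qscale_left)
  have "Y * qpoly (pCons a p) X = qscale a Y + (Y * X) * qpoly p X"
    by (simp add: distrib_left mult_qscale_right mult.assoc)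
  also have "\<dots> = qscale a Y + (X - qscale s 1) * (Y * qpoly p X)"
    by (simp add: YX mult.assoc)
  also have "\<dots> = (qscale a 1 + (X - qscale s 1) * qpoly (p \<circ>\<^sub>p [:- s, 1:]) X) * Y"
    by (simp add: pCons algebra_simps mult_qscale_left)
  also have "qscale a 1 + (X - qscale s 1) * qpoly (p \<circ>\<^sub>p [:- s, 1:]) X
      = qpoly (pCons a p \<circ>\<^sub>p [:- s, 1:]) X"
    by (simp add: pcompose_pCons qpoly_add qpoly_additive.diff qpoly_smult algebra_simps
        mult_qscale_left)
  finally show ?case .
qed simp

lemma qpoly_mult_ad_eigen:
  assumes "X * Y - Y * X = qscale s Y"
  shows "qpoly p X * Y = Y * qpoly (p \<circ>\<^sub>p [:s, 1:]) X"
proof -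
  have "(p \<circ>\<^sub>p [:s, 1:]) \<circ>\<^sub>p [:- s, 1:] = p"
    by (simp add: pcompose_pCons flip: pcompose_assoc)
  then show ?thesis
    using ad_eigen_mult_qpoly[OF assms, of "p \<circ>\<^sub>p [:s, 1:]"] by simp
qed

definition weight_vector :: "'a::qalgebra_1 \<Rightarrow> rat \<Rightarrow> 'a \<Rightarrow> bool" where
  "weight_vector X \<mu> Y \<longleftrightarrow> X * Y = qscale \<mu> Y"

lemma weight_vector_ad_eigen_mult:
  assumes "X * Y - Y * X = qscale s Y" and "weight_vector X \<mu> Z"
  shows "weight_vector X (\<mu> + s) (Y * Z)"
proof -
  have "X * (Y * Z) = (X * Y - Y * X) * Z + Y * (X * Z)"
    by (simp add: algebra_simps)
  then show ?thesis
    using assms by (simp add: weight_vector_def mult_qscale_left mult_qscale_right qscale_add_left)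
qed

lemma weight_vector_ffact:
  assumes "weight_vector X \<mu> Y"
  shows "ffact X n * Y = qscale (ffact \<mu> n) Y"
proof (induct n)
  case (Suc n)
  have "ffact X (Suc n) * Y = ffact X n * (X * Y) - ffact X n * (of_nat n * Y)"
    by (simp add: algebra_simps)
  also have "\<dots> = qscale (\<mu> - of_nat n) (ffact X n * Y)"
    using assms
    by (simp add: weight_vector_def mult_qscale_right qspace.scale_left_diff_distrib
        flip: qscale_of_nat)
  finally show ?case
    by (simp add: Suc qscale_mult mult.commute)
qed simp

lemma weight_vector_eq_0:
  assumes "ffact X (Suc d) = 0" and "weight_vector X \<mu> Y" and "\<mu> \<notin> of_nat ` {..d}"
  shows "Y = 0"
proof -
  have "ffact \<mu> (Suc d) \<noteq> 0"
    using assms(3) by (auto simp: ffact_eq_prod)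
  moreover have "qscale (ffact \<mu> (Suc d)) Y = 0"
    using weight_vector_ffact[OF assms(2), of "Suc d"] by (simp only: assms(1) mult_zero_left)
  ultimately show ?thesis
    by (metis qscale_mult qscale_one qspace.scale_zero_right nonzero_divide_eq_eq)
qed

definition lagrange_basis :: "nat \<Rightarrow> nat \<Rightarrow> 'a::field_char_0 poly" where
  "lagrange_basis d k = smult (1 / (\<Prod>j\<in>{..d}-{k}. of_nat k - of_nat j))
     (\<Prod>j\<in>{..d}-{k}. [:- of_nat j, 1:])"

lemma poly_lagrange_basis:
  "\<mu> \<le> d \<Longrightarrow> poly (lagrange_basis d k) (of_nat \<mu>) = (if \<mu> = k then 1 else 0)"
  by (auto simp: lagrange_basis_def poly_prod)

lemma degree_lagrange_basis:
  assumes "k \<le> d"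
  shows "degree (lagrange_basis d k) \<le> d"
proof -
  have "degree (\<Prod>j\<in>{..d}-{k}. [:- of_nat j, 1::'a:])
      \<le> sum (degree \<circ> (\<lambda>j. [:- of_nat j, 1::'a:])) ({..d}-{k})"
    by (rule degree_prod_sum_le) simp
  also have "\<dots> = d"
    using assms by simp
  finally show ?thesis
    unfolding lagrange_basis_def using degree_smult_le order_trans by blast
qed

lemma sum_lagrange_basis: "(\<Sum>k\<le>d. lagrange_basis d k) = (1 :: 'a::field_char_0 poly)"
proof (rule poly_eqI_degree[where A = "of_nat ` {..d}"])
  have card: "card (of_nat ` {..d} :: 'a set) = Suc d"
    by (simp add: card_image inj_on_def)
  show "poly (\<Sum>k\<le>d. lagrange_basis d k) x = poly 1 x" if "x \<in> of_nat ` {..d}" for x :: 'a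
    using that by (auto simp: poly_sum poly_lagrange_basis)
  show "degree (\<Sum>k\<le>d. lagrange_basis d k) < card (of_nat ` {..d} :: 'a set)"
    unfolding card using degree_lagrange_basis by (intro le_imp_less_Suc degree_sum_le) auto
  show "degree (1 :: 'a poly) < card (of_nat ` {..d} :: 'a set)"
    unfolding card by simp
qed

lemma ffact_X_dvd_lagrange_basis:
  assumes "k \<le> d"
  shows "ffact [:0, 1:] (Suc d) dvd [:- of_nat k, 1:] * (lagrange_basis d k :: 'a::field_char_0 poly)"
proof -
  have "ffact [:0, 1::'a:] (Suc d) = (\<Prod>j\<in>{..d}. [:- of_nat j, 1:])"
    by (simp add: ffact_eq_prod of_nat_poly lessThan_Suc_atMost)
  also have "\<dots> = [:- of_nat k, 1:] * (\<Prod>j\<in>{..d}-{k}. [:- of_nat j, 1:])"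
    using assms by (subst prod.remove[of _ k]) auto
  finally show ?thesis
    unfolding lagrange_basis_def mult_smult_right by (simp add: dvd_smult)
qed

lemma weight_vector_lagrange_basis:
  assumes "ffact X (Suc d) = 0" and "k \<le> d"
  shows "weight_vector X (of_nat k) (qpoly (lagrange_basis d k) X)"
proof -
  obtain r :: "rat poly"
    where r: "[:- of_nat k, 1:] * lagrange_basis d k = ffact [:0, 1:] (Suc d) * r"
    using ffact_X_dvd_lagrange_basis[OF assms(2)] by blast
  have "qpoly ([:- of_nat k, 1:] * lagrange_basis d k) X = 0"
    unfolding r qpoly_mult qpoly_ffact qpoly_X assms(1) by simp
  moreover have "qpoly ([:- of_nat k, 1:] * lagrange_basis d k) X
      = X * qpoly (lagrange_basis d k) X - qscale (of_nat k) (qpoly (lagrange_basis d k) X)"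
    unfolding qpoly_mult by (simp add: algebra_simps mult_qscale_left)
  ultimately show ?thesis
    by (simp add: weight_vector_def)
qed

lemma sum_qpoly_lagrange_basis: "(\<Sum>k\<le>d. qpoly (lagrange_basis d k) X) = 1"
  using arg_cong[OF sum_lagrange_basis, of "\<lambda>p. qpoly p X"] by (simp add: qpoly_additive.sum)

section \<open>The algebra B_d\<close>

lemma sl2_commutator_power:
  fixes e f K :: "'a::ring_1"
  assumes ef: "e * f - f * e = K" and Kf: "K * f = f * (K - 2)"
  shows "e * f ^ Suc j = f ^ Suc j * e + f ^ j * (of_nat (Suc j) * (K - of_nat j))"
proof (induct j)
  case 0
  show ?case using ef by (simp add: algebra_simps)
next
  case (Suc j)
  have Kj: "(K - of_nat j) * f = f * (K - of_nat (j + 2))"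
    using Kf by (simp add: algebra_simps mult_of_nat_commute mult_2_right)
  have "e * f ^ Suc (Suc j) = (e * f ^ Suc j) * f"
    by (simp add: power_Suc2 mult.assoc del: power_Suc)
  also have "\<dots> = f ^ Suc j * (e * f) + f ^ j * (of_nat (Suc j) * ((K - of_nat j) * f))"
    by (simp only: Suc distrib_right mult.assoc)
  also have "\<dots> = f ^ Suc j * (f * e + K) + f ^ j * (f * (of_nat (Suc j) * (K - of_nat (j + 2))))"
  proof -
    have "e * f = f * e + K"
      using ef by (simp add: algebra_simps)
    moreover have "of_nat (Suc j) * f = f * of_nat (Suc j)"
      by (rule mult_of_nat_commute)
    ultimately show ?thesis
      by (simp only: Kj) (simp only: mult.assoc[symmetric])
  qed
  also have "\<dots> = f ^ Suc (Suc j) * e + f ^ Suc j * (K + of_nat (Suc j) * (K - of_nat (j + 2)))"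
    by (simp add: algebra_simps power_Suc2 del: power_Suc)
  also have "K + of_nat (Suc j) * (K - of_nat (j + 2)) = of_nat (Suc (Suc j)) * (K - of_nat (Suc j))"
    by (simp add: algebra_simps)
  finally show ?case .
qed

text \<open>H plays the role of H1; the generator H2 = d - H1 is eliminated, so [e, f] = H1 - H2
  becomes 2H - d. The triple (f, e, H2) satisfies the same relations.\<close>

locale Bd =
  fixes e f H :: "'a::qalgebra_1" and d :: nat
  assumes H_e: "H * e - e * H = e"
    and H_f: "H * f - f * H = - f"
    and e_f: "e * f - f * e = H + H - of_nat d"
    and ffact_H: "ffact H (Suc d) = 0"
begin

lemma H_e_power: "H * e ^ n - e ^ n * H = qscale (of_nat n) (e ^ n)"
  using ad_eigen_power[of H e 1 n] H_e by (simp add: qscale_one)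

lemma H_f_power: "H * f ^ n - f ^ n * H = qscale (- of_nat n) (f ^ n)"
  using ad_eigen_power[of H f "-1" n] H_f by (simp add: qspace.scale_minus_left qscale_one)

lemma qpoly_H_mult_e: "qpoly p H * e = e * qpoly (p \<circ>\<^sub>p [:1, 1:]) H"
  using qpoly_mult_ad_eigen[OF H_e_power[of 1]] by simp

lemma f_power_mult_qpoly_H: "f ^ j * qpoly p H = qpoly (p \<circ>\<^sub>p [:of_nat j, 1:]) H * f ^ j"
  using ad_eigen_mult_qpoly[OF H_f_power] by simp

lemma qpoly_H_mult_f_power: "qpoly p H * f ^ j = f ^ j * qpoly (p \<circ>\<^sub>p [:- of_nat j, 1:]) H"
  using qpoly_mult_ad_eigen[OF H_f_power] by simp

lemma e_mult_f_power: "\<exists>r. e * f ^ Suc j = f ^ Suc j * e + f ^ j * qpoly r H"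
proof -
  define K where "K = H + H - of_nat d"
  have Hf: "H * f = f * H - f"
    using H_f by (simp add: algebra_simps)
  have "K * f = H * f + H * f - of_nat d * f"
    by (simp add: K_def algebra_simps)
  also have "\<dots> = f * (K - 2)"
    by (simp add: Hf K_def algebra_simps mult_of_nat_commute mult_2_right)
  finally have "K * f = f * (K - 2)" .
  then have "e * f ^ Suc j = f ^ Suc j * e + f ^ j * (of_nat (Suc j) * (K - of_nat j))"
    using e_f by (intro sl2_commutator_power) (simp add: K_def)
  moreover have "of_nat (Suc j) * (K - of_nat j)
      = qpoly (of_nat (Suc j) * ([:0, 1:] + [:0, 1:] - of_nat d - of_nat j)) H"
    by (simp only: K_def qpoly_mult qpoly_add qpoly_additive.diff qpoly_of_nat qpoly_X)
  ultimately show ?thesis by auto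
qed

definition height_span :: "nat \<Rightarrow> 'a set" where
  "height_span k = qspace.span {e ^ i * qpoly p H * f ^ j | i j p. i + j < k}"

lemma height_span_generator: "i + j < k \<Longrightarrow> e ^ i * qpoly p H * f ^ j \<in> height_span k"
  unfolding height_span_def by (rule qspace.span_base) blast

lemma zero_in_height_span [simp]: "0 \<in> height_span k"
  unfolding height_span_def by (rule qspace.span_zero)

lemma height_span_mult_right:
  assumes "x \<in> height_span k"
    and "\<And>i j p. i + j < k \<Longrightarrow> e ^ i * qpoly p H * f ^ j * z \<in> height_span k'"
  shows "x * z \<in> height_span k'"
  using span_mult_right[of x _ z] assms unfolding height_span_def by blast

lemma height_span_mult_qpoly: "x \<in> height_span k \<Longrightarrow> x * qpoly q H \<in> height_span k"
proof (erule height_span_mult_right)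
  fix i j p assume "i + j < k"
  have "e ^ i * qpoly p H * f ^ j * qpoly q H
      = e ^ i * qpoly (p * (q \<circ>\<^sub>p [:of_nat j, 1:])) H * f ^ j"
    by (simp add: f_power_mult_qpoly_H qpoly_mult mult.assoc)
  then show "e ^ i * qpoly p H * f ^ j * qpoly q H \<in> height_span k"
    using \<open>i + j < k\<close> by (simp add: height_span_generator)
qed

lemma height_span_generator_mult_e:
  assumes "i + j < k"
  shows "e ^ i * qpoly p H * f ^ j * e \<in> height_span (Suc k)"
proof (cases j)
  case 0
  have "e ^ i * qpoly p H * f ^ j * e = e ^ Suc i * qpoly (p \<circ>\<^sub>p [:1, 1:]) H * f ^ 0"
    by (simp add: 0 qpoly_H_mult_e mult.assoc power_Suc2 del: power_Suc)
  then show ?thesis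
    using assms 0 by (simp only: height_span_generator)
next
  case (Suc j')
  obtain r where "e * f ^ j = f ^ j * e + f ^ j' * qpoly r H"
    using e_mult_f_power Suc by blast
  then have "f ^ j * e = e * f ^ j - f ^ j' * qpoly r H"
    by simp
  then have "e ^ i * qpoly p H * f ^ j * e
      = e ^ i * (qpoly p H * e) * f ^ j - e ^ i * qpoly p H * f ^ j' * qpoly r H"
    by (simp only: mult.assoc right_diff_distrib)
  also have "\<dots> = e ^ Suc i * qpoly (p \<circ>\<^sub>p [:1, 1:]) H * f ^ j
      - e ^ i * qpoly p H * f ^ j' * qpoly r H"
    by (simp only: qpoly_H_mult_e power_Suc2 mult.assoc)
  finally have eq: "e ^ i * qpoly p H * f ^ j * e
      = e ^ Suc i * qpoly (p \<circ>\<^sub>p [:1, 1:]) H * f ^ j - e ^ i * qpoly p H * f ^ j' * qpoly r H" .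
  have "e ^ Suc i * qpoly (p \<circ>\<^sub>p [:1, 1:]) H * f ^ j \<in> height_span (Suc k)"
    using assms by (intro height_span_generator) simp
  moreover have "e ^ i * qpoly p H * f ^ j' * qpoly r H \<in> height_span (Suc k)"
    using assms Suc by (intro height_span_mult_qpoly height_span_generator) simp
  ultimately show ?thesis
    unfolding eq height_span_def by (rule qspace.span_diff)
qed

lemma height_span_mult_e: "x \<in> height_span k \<Longrightarrow> x * e \<in> height_span (Suc k)"
  by (erule height_span_mult_right) (rule height_span_generator_mult_e)

text \<open>Each e moved right through f^c raises the weight of Y by one and leaves a commutator
  term of smaller height; once the weight exceeds d the leading term vanishes.\<close>

lemma e_power_f_power_mult_weight_vector:
  assumes "weight_vector H \<mu> Y" and "of_nat d < \<mu> + of_nat a"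
  shows "\<exists>u\<in>height_span (a + c). e ^ a * f ^ c * Y = u * Y"
  using assms
proof (induct a arbitrary: c \<mu> Y)
  case 0
  then have "Y = 0"
    by (intro weight_vector_eq_0[OF ffact_H, of \<mu>]) auto
  then show ?case
    by (intro bexI[of _ 0]) simp_all
next
  case (Suc a)
  show ?case
  proof (cases c)
    case 0
    have "weight_vector H (\<mu> + of_nat (Suc a)) (e ^ Suc a * Y)"
      by (rule weight_vector_ad_eigen_mult[OF H_e_power Suc.prems(1)])
    then have "e ^ Suc a * Y = 0"
      using Suc.prems(2) by (intro weight_vector_eq_0[OF ffact_H]) auto
    then show ?thesis
      using 0 by (intro bexI[of _ 0]) simp_all
  next
    case (Suc c')
    obtain r where r: "e * f ^ c = f ^ c * e + f ^ c' * qpoly r H"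
      using e_mult_f_power Suc by blast
    have "weight_vector H (\<mu> + 1) (e * Y)"
      using weight_vector_ad_eigen_mult[OF H_e_power[of 1] Suc.prems(1)] by simp
    moreover have "of_nat d < \<mu> + 1 + of_nat a"
      using Suc.prems(2) by simp
    ultimately obtain u where u: "u \<in> height_span (a + c)" "e ^ a * f ^ c * (e * Y) = u * (e * Y)"
      using Suc.hyps by blast
    have "e ^ Suc a * f ^ c * Y = e ^ a * f ^ c * (e * Y) + e ^ a * qpoly 1 H * f ^ c' * qpoly r H * Y"
      by (simp add: r algebra_simps power_Suc2 del: power_Suc)
    also have "\<dots> = (u * e + e ^ a * qpoly 1 H * f ^ c' * qpoly r H) * Y"
      using u(2) by (simp add: distrib_right mult.assoc)
    finally have eq: "e ^ Suc a * f ^ c * Y = (u * e + e ^ a * qpoly 1 H * f ^ c' * qpoly r H) * Y" .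
    have "u * e \<in> height_span (Suc a + c)"
      using height_span_mult_e[OF u(1)] by simp
    moreover have "e ^ a * qpoly 1 H * f ^ c' * qpoly r H \<in> height_span (Suc a + c)"
      using Suc by (intro height_span_mult_qpoly height_span_generator) simp
    ultimately show ?thesis
      using eq qspace.span_add unfolding height_span_def by blast
  qed
qed

text \<open>ffact H b acts on the weight vector f^c Y of weight k - c by the scalar ffact (k - c) b,
  which vanishes unless k \<ge> b + c, i.e. unless k + a > d as in the previous lemma.\<close>

lemma e_power_ffact_f_power_mult_weight_vector:
  assumes "weight_vector H (of_nat k) Y" and "a + b + c = Suc d"
  shows "\<exists>u\<in>height_span (a + c). e ^ a * ffact H b * f ^ c * Y = u * Y"
proof -
  have fc: "weight_vector H (of_nat k - of_nat c) (f ^ c * Y)"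
    using weight_vector_ad_eigen_mult[OF H_f_power assms(1)] by simp
  have Z: "e ^ a * ffact H b * f ^ c * Y = qscale (ffact (of_nat k - of_nat c) b) (e ^ a * f ^ c * Y)"
    using weight_vector_ffact[OF fc, of b] by (simp add: mult.assoc mult_qscale_right)
  consider "k < c" | "c \<le> k" "k < b + c" | "b + c \<le> k"
    by linarith
  then show ?thesis
  proof cases
    case 1
    then have "f ^ c * Y = 0"
      by (intro weight_vector_eq_0[OF ffact_H fc]) auto
    then show ?thesis
      by (intro bexI[of _ 0]) (simp_all add: mult.assoc)
  next
    case 2
    then have "ffact (of_nat k - of_nat c :: rat) b = 0"
      by (auto simp: ffact_eq_prod intro!: bexI[of _ "k - c"])
    then show ?thesis
      by (intro bexI[of _ 0]) (simp_all add: Z)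
  next
    case 3
    then have "of_nat d < of_nat k + (of_nat a :: rat)"
      using assms(2) by simp
    then obtain u where "u \<in> height_span (a + c)" "e ^ a * f ^ c * Y = u * Y"
      using e_power_f_power_mult_weight_vector[OF assms(1)] by blast
    then show ?thesis
      unfolding Z height_span_def
      by (intro bexI[of _ "qscale (ffact (of_nat k - of_nat c) b) u"] qspace.span_scale)
        (simp_all add: mult_qscale_left)
  qed
qed

lemma e_power_ffact_f_power_in_height_span:
  assumes "a + b + c = Suc d"
  shows "e ^ a * ffact H b * f ^ c \<in> height_span (a + c)"
proof -
  define idem where "idem k = qpoly (lagrange_basis d k) H" for k
  let ?Z = "e ^ a * ffact H b * f ^ c"
  have "?Z * idem k \<in> height_span (a + c)" if "k \<le> d" for k
  proof -
    have "weight_vector H (of_nat k) (idem k)"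
      unfolding idem_def using ffact_H that by (rule weight_vector_lagrange_basis)
    then obtain u where "u \<in> height_span (a + c)" "?Z * idem k = u * idem k"
      using e_power_ffact_f_power_mult_weight_vector assms by blast
    then show ?thesis
      unfolding idem_def by (simp add: height_span_mult_qpoly)
  qed
  then have "(\<Sum>k\<le>d. ?Z * idem k) \<in> height_span (a + c)"
    unfolding height_span_def by (intro qspace.span_sum) (simp add: height_span_def)
  then show ?thesis
    by (simp add: idem_def sum_qpoly_lagrange_basis flip: sum_distrib_left)
qed

definition monomial :: "nat \<Rightarrow> nat \<Rightarrow> nat \<Rightarrow> 'a" where
  "monomial i t j = dpow e i * binomA H t * dpow f j"

definition monomial_span :: "nat \<Rightarrow> 'a set" where
  "monomial_span k = qspace.span
     ((\<lambda>(i, t, j). monomial i t j) ` {(i, t, j). i + t + j \<le> d \<and> i + j < k})"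

lemma monomial_eq:
  "monomial i t j = qscale (1 / of_nat (fact i * fact t * fact j)) (e ^ i * ffact H t * f ^ j)"
  by (simp add: monomial_def dpow_def binomA_def mult_qscale_left mult_qscale_right qscale_mult
      mult.commute mult.left_commute)

lemma monomial_in_monomial_span:
  "i + t + j \<le> d \<Longrightarrow> i + j < k \<Longrightarrow> monomial i t j \<in> monomial_span k"
  unfolding monomial_span_def by (rule qspace.span_base) force

lemma monomial_span_mono: "k \<le> k' \<Longrightarrow> monomial_span k \<subseteq> monomial_span k'"
  unfolding monomial_span_def by (intro qspace.span_mono image_mono) auto

lemma ffact_generator_in_monomial_span:
  assumes "i + t + j \<le> d" and "i + j < k"
  shows "e ^ i * ffact H t * f ^ j \<in> monomial_span k"
proof -
  have "e ^ i * ffact H t * f ^ j = qscale (of_nat (fact i * fact t * fact j)) (monomial i t j)"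
    by (simp add: monomial_eq qscale_mult qscale_one)
  then show ?thesis
    using monomial_in_monomial_span[OF assms] unfolding monomial_span_def
    by (simp add: qspace.span_scale)
qed

text \<open>Division by the falling factorial of degree n = d + 1 - k: the quotient part contains
  e^i binom(H, n) f^j, of degree d + 1 and height k, which lies in the height_span k by the
  previous lemma; the remainder has degree below n.\<close>

lemma height_span_generator_in_monomial_span:
  assumes IH: "height_span k \<subseteq> monomial_span k" and "k \<le> d" and "i + j = k"
  shows "e ^ i * qpoly p H * f ^ j \<in> monomial_span (Suc k)"
proof -
  define n where "n = Suc d - k"
  define F where "F t = ffact [:0, 1::rat:] t" for t
  obtain s \<alpha> where p: "p = s * F n + (\<Sum>t<n. smult (\<alpha> t) (F t))"
    unfolding F_def using ffact_X_division by blast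
  have "qpoly s H * ffact H n = ffact H n * qpoly s H"
    using qpoly_mult_commute[of s H "F n"] by (simp add: F_def qpoly_ffact)
  then have "qpoly p H = ffact H n * qpoly s H + (\<Sum>t<n. qscale (\<alpha> t) (ffact H t))"
    by (simp add: p F_def qpoly_add qpoly_mult qpoly_additive.sum qpoly_smult qpoly_ffact)
  then have "e ^ i * qpoly p H * f ^ j = e ^ i * ffact H n * (qpoly s H * f ^ j)
      + (\<Sum>t<n. qscale (\<alpha> t) (e ^ i * ffact H t * f ^ j))"
    by (simp add: algebra_simps sum_distrib_left sum_distrib_right mult_qscale_left mult_qscale_right)
  also have "qpoly s H * f ^ j = f ^ j * qpoly (s \<circ>\<^sub>p [:- of_nat j, 1:]) H"
    by (rule qpoly_H_mult_f_power)
  finally have split: "e ^ i * qpoly p H * f ^ j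
      = e ^ i * ffact H n * f ^ j * qpoly (s \<circ>\<^sub>p [:- of_nat j, 1:]) H
        + (\<Sum>t<n. qscale (\<alpha> t) (e ^ i * ffact H t * f ^ j))"
    by (simp only: mult.assoc)
  have "e ^ i * ffact H n * f ^ j \<in> height_span k"
    using e_power_ffact_f_power_in_height_span[of i n j] assms by (simp add: n_def)
  then have "e ^ i * ffact H n * f ^ j * qpoly (s \<circ>\<^sub>p [:- of_nat j, 1:]) H
      \<in> monomial_span (Suc k)"
    using IH monomial_span_mono[of k "Suc k"] by (auto dest: height_span_mult_qpoly)
  moreover have "e ^ i * ffact H t * f ^ j \<in> monomial_span (Suc k)" if "t < n" for t
    using that assms by (intro ffact_generator_in_monomial_span) (simp_all add: n_def)
  ultimately show ?thesis
    unfolding split monomial_span_def by (intro qspace.span_add qspace.span_sum qspace.span_scale) auto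
qed

lemma height_span_subset_monomial_span:
  "k \<le> Suc d \<Longrightarrow> height_span k \<subseteq> monomial_span k"
proof (induct k)
  case 0
  have "height_span 0 = {0}"
    by (simp add: height_span_def)
  then show ?case
    by (simp add: monomial_span_def qspace.span_zero)
next
  case (Suc k)
  then have IH: "height_span k \<subseteq> monomial_span k" and "k \<le> d"
    by simp_all
  have "e ^ i * qpoly p H * f ^ j \<in> monomial_span (Suc k)" if "i + j < Suc k" for i j p
  proof (cases "i + j < k")
    case True
    then show ?thesis
      using height_span_generator[OF True, of p] IH monomial_span_mono[of k "Suc k"] by auto
  next
    case False
    then show ?thesis
      using that height_span_generator_in_monomial_span[OF IH \<open>k \<le> d\<close>] by simp
  qed
  then have "{e ^ i * qpoly p H * f ^ j | i j p. i + j < Suc k} \<subseteq> monomial_span (Suc k)"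
    by blast
  then show ?case
    unfolding height_span_def by (rule qspace.span_minimal) (simp add: monomial_span_def)
qed

lemma monomial_in_lower_monomial_span:
  assumes "a + b + c = Suc d"
  shows "monomial a b c \<in> monomial_span (a + c)"
proof -
  have "e ^ a * ffact H b * f ^ c \<in> monomial_span (a + c)"
    using e_power_ffact_f_power_in_height_span[OF assms] height_span_subset_monomial_span[of "a + c"]
      assms by auto
  then show ?thesis
    unfolding monomial_eq monomial_span_def by (rule qspace.span_scale)
qed

theorem straightening:
  assumes "a + b + c = Suc d"
  shows "\<exists>coef :: nat \<times> nat \<times> nat \<Rightarrow> rat.
    monomial a b c = (\<Sum>(a', b', c') \<in> {(a', b', c'). a' + b' + c' < a + b + c \<and> a' + c' < a + c}.
      qscale (coef (a', b', c')) (monomial a' b' c'))"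
proof -
  let ?I = "{(a', b', c'). a' + b' + c' < a + b + c \<and> a' + c' < a + c}"
  have I: "?I = {(i, t, j). i + t + j \<le> d \<and> i + j < a + c}"
    using assms by auto
  have "finite ?I"
    by (rule finite_subset[of _ "{..d} \<times> {..d} \<times> {..d}"]) (auto simp: I)
  moreover have "monomial a b c \<in> qspace.span ((\<lambda>(i, t, j). monomial i t j) ` ?I)"
    using monomial_in_lower_monomial_span[OF assms] by (simp add: I monomial_span_def)
  ultimately obtain coef
    where "monomial a b c = (\<Sum>x\<in>?I. qscale (coef x) ((\<lambda>(i, t, j). monomial i t j) x))"
    using qspace.span_image_sum by blast
  then show ?thesis
    by (intro exI[of _ coef]) (simp add: case_prod_beta)
qed

end

lemma Bd_of_relations:
  assumes "Bd_relations d e f H1 H2"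
  shows "Bd e f H1 d" and "Bd f e H2 d"
proof -
  have rel: "H1 * e - e * H1 = e" "H1 * f - f * H1 = - f" "H2 * e - e * H2 = - e"
    "H2 * f - f * H2 = f" "e * f - f * e = H1 - H2" "H1 + H2 = of_nat d" "ffact H1 (Suc d) = 0"
    using assms by (simp_all add: Bd_relations_def)
  have H1: "H1 = of_nat d - H2" and H2: "H2 = of_nat d - H1"
    using rel(6) by (simp_all add: algebra_simps flip: rel(6))
  show "Bd e f H1 d"
    by unfold_locales (use rel in \<open>simp_all add: H2 algebra_simps\<close>)
  have "ffact H2 (Suc d) = qpoly (ffact (of_nat d - [:0, 1:]) (Suc d)) H1"
    by (simp only: H2 qpoly_ffact qpoly_additive.diff qpoly_of_nat qpoly_X)
  also have "\<dots> = 0"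
    by (simp only: ffact_reflect qpoly_mult qpoly_ffact qpoly_X rel(7) mult_zero_right)
  finally show "Bd f e H2 d"
    by unfold_locales (use rel in \<open>simp_all add: H1 algebra_simps\<close>)
qed

theorem theorem4p5:
  fixes e f H1 H2 :: "'a::qalgebra_1" and d :: nat
  assumes "Bd_relations d e f H1 H2"
  shows "\<forall>a b c. a + b + c = d + 1 \<longrightarrow>
           (\<exists>coef :: nat \<times> nat \<times> nat \<Rightarrow> rat.
              dpow e a * binomA H1 b * dpow f c =
              (\<Sum>(a', b', c') \<in> {(a', b', c'). a' + b' + c' < a + b + c \<and> a' + c' < a + c}.
                 qscale (coef (a', b', c')) (dpow e a' * binomA H1 b' * dpow f c'))) \<and>
         (\<forall>a b c. a + b + c = d + 1 \<longrightarrow>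
           (\<exists>coef :: nat \<times> nat \<times> nat \<Rightarrow> rat.
              dpow f a * binomA H2 b * dpow e c =
              (\<Sum>(a', b', c') \<in> {(a', b', c'). a' + b' + c' < a + b + c \<and> a' + c' < a + c}.
                 qscale (coef (a', b', c')) (dpow f a' * binomA H2 b' * dpow e c'))))"
proof -
  have B1: "Bd e f H1 d" and B2: "Bd f e H2 d"
    using Bd_of_relations[OF assms] by blast+
  show ?thesis
    using Bd.straightening[OF B1] Bd.straightening[OF B2]
    unfolding Bd.monomial_def[OF B1] Bd.monomial_def[OF B2] by simp
qed

end
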